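(* Let $\overrightarrow{W}$ be a Morse sequence on a simplicial complex $K$. Then for every integer $p\ge0$, the complex $W^-_{p+1}$ collapses onto $W^+_p$.
   Context: A simplicial complex $K$ is a finite collection of non-empty finite sets closed under taking non-empty subsets; $\dim\sigma=|\sigma|-1$. A pair $(\sigma,\tau)$ with $\sigma\subsetneq\tau$ is a free pair for $K$ if $\tau$ is the only simplex other than $\sigma$ containing $\sigma$; then $K\setminus\{\sigma,\tau\}$ is an elementary collapse of $K$ and $K$ an elementary expansion of $K\setminus\{\sigma,\tau\}$. $K$ collapses onto $L$ if there is a sequence $\langle K=L_0,\dots,L_m=L\rangle$, $m\ge0$, with each $L_j$ an elementary collapse of $L_{j-1}$. If $\nu$ is a facet (maximal simplex) of $K$, $K$ is an elementary filling of $K\setminus\{\nu\}$. A Morse sequence on $K$ is a sequence $\langle\emptyset=K_0,\dots,K_k=K\rangle$ with each $K_i$ an elementary expansion or filling of $K_{i-1}$; simplices added by fillings are critical; for an expansion $K_i=K_{i-1}\cup\{\sigma,\tau\}$, $\sigma\subset\tau$, $\sigma$ is lower regular and $\tau$ upper regular. Writing $\widehat W,\underline W,\overline W$ for the sets of critical, lower regular and upper regular simplices, the lower and upper $p$-skeletons are $W^-_p=\{\nu\in\overline W:\dim\nu\le p\}\cup\{\nu\in\widehat W\cup\underline W:\dim\nu\le p-1\}$ and $W^+_p=\{\nu\in\widehat W\cup\overline W:\dim\nu\le p\}\cup\{\nu\in\underline W:\dim\nu\le p-1\}$ (these are simplicial complexes). *)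

theory Defs
  imports Main
begin

definition simplicial_complex :: "'a set set \<Rightarrow> bool" where
  "simplicial_complex K \<longleftrightarrow> finite K \<and>
     (\<forall>\<sigma>\<in>K. \<sigma> \<noteq> {} \<and> finite \<sigma>) \<and>
     (\<forall>\<sigma>\<in>K. \<forall>\<tau>. \<tau> \<subseteq> \<sigma> \<and> \<tau> \<noteq> {} \<longrightarrow> \<tau> \<in> K)"

definition sdim :: "'a set \<Rightarrow> int" where
  "sdim \<sigma> = int (card \<sigma>) - 1"

definition free_pair :: "'a set set \<Rightarrow> 'a set \<Rightarrow> 'a set \<Rightarrow> bool" where
  "free_pair K \<sigma> \<tau> \<longleftrightarrow> \<sigma> \<in> K \<and> \<tau> \<in> K \<and> \<sigma> \<subset> \<tau> \<and>
     (\<forall>\<nu>\<in>K. \<sigma> \<subseteq> \<nu> \<longrightarrow> \<nu> = \<sigma> \<or> \<nu> = \<tau>)"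

definition elem_collapse :: "'a set set \<Rightarrow> 'a set set \<Rightarrow> bool" where
  "elem_collapse K L \<longleftrightarrow> (\<exists>\<sigma> \<tau>. free_pair K \<sigma> \<tau> \<and> L = K - {\<sigma>, \<tau>})"

definition collapses_onto :: "'a set set \<Rightarrow> 'a set set \<Rightarrow> bool" where
  "collapses_onto K L \<longleftrightarrow> elem_collapse\<^sup>*\<^sup>* K L"

definition facet :: "'a set set \<Rightarrow> 'a set \<Rightarrow> bool" where
  "facet K \<nu> \<longleftrightarrow> \<nu> \<in> K \<and> (\<forall>\<mu>\<in>K. \<nu> \<subseteq> \<mu> \<longrightarrow> \<mu> = \<nu>)"

definition expansion_step :: "'a set set \<Rightarrow> 'a set set \<Rightarrow> 'a set \<Rightarrow> 'a set \<Rightarrow> bool" where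
  "expansion_step K K' \<sigma> \<tau> \<longleftrightarrow> free_pair K' \<sigma> \<tau> \<and> K = K' - {\<sigma>, \<tau>}"

definition filling_step :: "'a set set \<Rightarrow> 'a set set \<Rightarrow> 'a set \<Rightarrow> bool" where
  "filling_step K K' \<nu> \<longleftrightarrow> facet K' \<nu> \<and> K = K' - {\<nu>}"

definition morse_sequence :: "'a set set list \<Rightarrow> 'a set set \<Rightarrow> bool" where
  "morse_sequence W K \<longleftrightarrow> W \<noteq> [] \<and> hd W = {} \<and> last W = K \<and>
     (\<forall>i<length W. simplicial_complex (W ! i)) \<and>
     (\<forall>i. Suc i < length W \<longrightarrow>
        (\<exists>\<sigma> \<tau>. expansion_step (W ! i) (W ! Suc i) \<sigma> \<tau>) \<or>
        (\<exists>\<nu>. filling_step (W ! i) (W ! Suc i) \<nu>))"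

definition critical :: "'a set set list \<Rightarrow> 'a set set" where
  "critical W = {\<nu>. \<exists>i. Suc i < length W \<and> filling_step (W ! i) (W ! Suc i) \<nu>}"

definition lower_regular :: "'a set set list \<Rightarrow> 'a set set" where
  "lower_regular W = {\<sigma>. \<exists>i \<tau>. Suc i < length W \<and> expansion_step (W ! i) (W ! Suc i) \<sigma> \<tau>}"

definition upper_regular :: "'a set set list \<Rightarrow> 'a set set" where
  "upper_regular W = {\<tau>. \<exists>i \<sigma>. Suc i < length W \<and> expansion_step (W ! i) (W ! Suc i) \<sigma> \<tau>}"

definition lower_skeleton :: "'a set set list \<Rightarrow> int \<Rightarrow> 'a set set" where
  "lower_skeleton W p =
     {\<nu> \<in> upper_regular W. sdim \<nu> \<le> p} \<union>
     {\<nu> \<in> critical W \<union> lower_regular W. sdim \<nu> \<le> p - 1}"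

definition upper_skeleton :: "'a set set list \<Rightarrow> int \<Rightarrow> 'a set set" where
  "upper_skeleton W p =
     {\<nu> \<in> critical W \<union> upper_regular W. sdim \<nu> \<le> p} \<union>
     {\<nu> \<in> lower_regular W. sdim \<nu> \<le> p - 1}"

end

theory Submission
  imports Defs
begin

text \<open>
  Let \<open>S\<close> be the set of regular simplices forming pairs of dimensions \<open>(p, p+1)\<close>, so that
  \<open>W\<^sup>-\<^sub>p\<^sub>+\<^sub>1 = W\<^sup>+\<^sub>p \<union> S\<close>. Intersecting \<open>S\<close> with the complexes \<open>K\<^sub>j\<close> of the Morse sequence
  interpolates between \<open>W\<^sup>+\<^sub>p\<close> and \<open>W\<^sup>-\<^sub>p\<^sub>+\<^sub>1\<close>. Going backwards along the sequence, each step either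
  leaves \<open>W\<^sup>+\<^sub>p \<union> (S \<inter> K\<^sub>j)\<close> unchanged or removes one pair \<open>(\<sigma>, \<tau>)\<close> with \<open>dim \<sigma> = p\<close>. This pair is
  free: a coface of \<open>\<sigma>\<close> lying in \<open>K\<^sub>j\<^sub>+\<^sub>1\<close> is \<open>\<sigma>\<close> or \<open>\<tau>\<close> because the pair is free in \<open>K\<^sub>j\<^sub>+\<^sub>1\<close>,
  and a coface of \<open>\<sigma>\<close> lying in \<open>W\<^sup>+\<^sub>p\<close> has dimension at most \<open>p\<close>, hence is \<open>\<sigma>\<close> itself.
\<close>

lemma free_pair_collapses_onto:
  assumes "free_pair K \<sigma> \<tau>"
  shows "collapses_onto K (K - {\<sigma>, \<tau>})"
  using assms unfolding collapses_onto_def elem_collapse_def by blast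

lemma collapses_onto_chain:
  assumes "\<And>j. j < n \<Longrightarrow> collapses_onto (L (Suc j)) (L j)"
  shows "collapses_onto (L n) (L 0)"
  using assms
proof (induction n)
  case 0
  show ?case unfolding collapses_onto_def by simp
next
  case (Suc n)
  then show ?case unfolding collapses_onto_def by (meson less_Suc_eq rtranclp_trans)
qed

lemma sdim_subset_eq:
  assumes "finite \<nu>" "\<sigma> \<subseteq> \<nu>" "sdim \<nu> \<le> sdim \<sigma>"
  shows "\<nu> = \<sigma>"
  using assms card_seteq[of \<nu> \<sigma>] unfolding sdim_def by simp

lemma expansion_stepD:
  assumes "expansion_step A B \<sigma> \<tau>"
  shows "B = A \<union> {\<sigma>, \<tau>}" "\<sigma> \<notin> A" "\<tau> \<notin> A" "\<sigma> \<subset> \<tau>"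
  using assms unfolding expansion_step_def free_pair_def by auto

lemma filling_stepD:
  assumes "filling_step A B \<nu>"
  shows "B = A \<union> {\<nu>}" "\<nu> \<notin> A"
  using assms unfolding filling_step_def facet_def by auto

lemma expansion_step_unique:
  assumes "expansion_step A B \<sigma> \<tau>" "expansion_step A B \<sigma>' \<tau>'"
  shows "\<sigma>' = \<sigma> \<and> \<tau>' = \<tau>"
  using expansion_stepD[OF assms(1)] expansion_stepD[OF assms(2)] by blast

lemma filling_step_not_expansion_step:
  assumes "filling_step A B \<nu>"
  shows "\<not> expansion_step A B \<sigma> \<tau>"
proof
  assume "expansion_step A B \<sigma> \<tau>"
  note pair = expansion_stepD[OF this] and new = filling_stepD(1)[OF assms]
  have "\<sigma> = \<nu>" "\<tau> = \<nu>" using pair(1-3) new by blast+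
  with pair(4) show False by blast
qed

lemma expansion_step_card:
  assumes "expansion_step A B \<sigma> \<tau>" "simplicial_complex B"
  shows "card \<tau> = Suc (card \<sigma>)"
proof -
  have free: "free_pair B \<sigma> \<tau>" using assms(1) unfolding expansion_step_def by blast
  then have "\<sigma> \<subset> \<tau>" "\<tau> \<in> B" unfolding free_pair_def by auto
  then obtain x where x: "x \<in> \<tau>" "x \<notin> \<sigma>" by blast
  have closed: "\<And>\<rho>. \<rho> \<subseteq> \<tau> \<Longrightarrow> \<rho> \<noteq> {} \<Longrightarrow> \<rho> \<in> B" and "finite \<tau>"
    using assms(2) \<open>\<tau> \<in> B\<close> unfolding simplicial_complex_def by blast+
  have "insert x \<sigma> \<in> B" using closed \<open>\<sigma> \<subset> \<tau>\<close> x(1) by simp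
  then have "insert x \<sigma> = \<tau>" using free x(2) unfolding free_pair_def by blast
  with x(2) \<open>finite \<tau>\<close> show ?thesis by auto
qed

lemma expansion_step_sdim:
  assumes "expansion_step A B \<sigma> \<tau>" "simplicial_complex B"
  shows "sdim \<tau> = sdim \<sigma> + 1"
  using expansion_step_card[OF assms] unfolding sdim_def by simp

lemma morse_sequence_step:
  assumes "morse_sequence W K" "Suc i < length W"
  obtains \<sigma> \<tau> where "expansion_step (W ! i) (W ! Suc i) \<sigma> \<tau>"
    | \<nu> where "filling_step (W ! i) (W ! Suc i) \<nu>"
  using assms unfolding morse_sequence_def by blast

lemma morse_sequence_complex:
  assumes "morse_sequence W K" "i < length W"
  shows "simplicial_complex (W ! i)"
  using assms unfolding morse_sequence_def by blast

lemma morse_sequence_first: "morse_sequence W K \<Longrightarrow> W ! 0 = {}"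
  unfolding morse_sequence_def by (auto simp: hd_conv_nth)

lemma morse_sequence_last: "morse_sequence W K \<Longrightarrow> W ! (length W - 1) = K"
  unfolding morse_sequence_def by (auto simp: last_conv_nth)

lemma morse_sequence_complex_last:
  assumes "morse_sequence W K"
  shows "simplicial_complex K"
proof -
  have "length W - 1 < length W" using assms unfolding morse_sequence_def by simp
  then show ?thesis using morse_sequence_complex[OF assms] morse_sequence_last[OF assms] by metis
qed

lemma morse_sequence_step_subset:
  assumes "morse_sequence W K" "Suc i < length W"
  shows "W ! i \<subseteq> W ! Suc i"
  by (cases rule: morse_sequence_step[OF assms]) (auto dest: expansion_stepD(1) filling_stepD(1))

lemma morse_sequence_mono:
  assumes "morse_sequence W K" "i \<le> j" "j < length W"
  shows "W ! i \<subseteq> W ! j"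
  using assms(2,3)
proof (induction j rule: dec_induct)
  case base
  show ?case by simp
next
  case (step n)
  then show ?case using morse_sequence_step_subset[OF assms(1), of n] by auto
qed

lemma morse_sequence_subset_last:
  assumes "morse_sequence W K" "i < length W"
  shows "W ! i \<subseteq> K"
  using morse_sequence_mono[OF assms(1), of i "length W - 1"] morse_sequence_last[OF assms(1)] assms(2)
  by simp

lemma morse_sequence_new_simplex_unique:
  assumes "morse_sequence W K" "Suc i < length W" "Suc j < length W"
    and "\<nu> \<in> W ! Suc i" "\<nu> \<notin> W ! i" "\<nu> \<in> W ! Suc j" "\<nu> \<notin> W ! j"
  shows "i = j"
proof (rule ccontr)
  assume "i \<noteq> j"
  then consider "Suc i \<le> j" | "Suc j \<le> i" by linarith
  then show False
  proof cases
    case 1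
    moreover have "j < length W" using assms(3) by simp
    ultimately have "W ! Suc i \<subseteq> W ! j" by (rule morse_sequence_mono[OF assms(1)])
    with assms(4,7) show False by blast
  next
    case 2
    moreover have "i < length W" using assms(2) by simp
    ultimately have "W ! Suc j \<subseteq> W ! i" by (rule morse_sequence_mono[OF assms(1)])
    with assms(5,6) show False by blast
  qed
qed

lemma critical_lower_regular_disjoint:
  assumes "morse_sequence W K"
  shows "critical W \<inter> lower_regular W = {}"
proof -
  have False if "Suc i < length W" "filling_step (W ! i) (W ! Suc i) \<nu>"
    and "Suc j < length W" "expansion_step (W ! j) (W ! Suc j) \<nu> \<tau>" for i j \<nu> \<tau>
  proof -
    have "i = j"
      using morse_sequence_new_simplex_unique[OF assms that(1,3), of \<nu>]
        filling_stepD[OF that(2)] expansion_stepD[OF that(4)] by blast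
    with that show False using filling_step_not_expansion_step by blast
  qed
  then show ?thesis unfolding critical_def lower_regular_def by blast
qed

lemma critical_upper_regular_disjoint:
  assumes "morse_sequence W K"
  shows "critical W \<inter> upper_regular W = {}"
proof -
  have False if "Suc i < length W" "filling_step (W ! i) (W ! Suc i) \<nu>"
    and "Suc j < length W" "expansion_step (W ! j) (W ! Suc j) \<sigma> \<nu>" for i j \<nu> \<sigma>
  proof -
    have "i = j"
      using morse_sequence_new_simplex_unique[OF assms that(1,3), of \<nu>]
        filling_stepD[OF that(2)] expansion_stepD[OF that(4)] by blast
    with that show False using filling_step_not_expansion_step by blast
  qed
  then show ?thesis unfolding critical_def upper_regular_def by blast
qed

lemma lower_upper_regular_disjoint:
  assumes "morse_sequence W K"
  shows "lower_regular W \<inter> upper_regular W = {}"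
proof -
  have False if "Suc i < length W" "expansion_step (W ! i) (W ! Suc i) \<nu> \<tau>"
    and "Suc j < length W" "expansion_step (W ! j) (W ! Suc j) \<sigma> \<nu>" for i j \<nu> \<tau> \<sigma>
  proof -
    have "i = j"
      using morse_sequence_new_simplex_unique[OF assms that(1,3), of \<nu>]
        expansion_stepD[OF that(2)] expansion_stepD[OF that(4)] by blast
    with that have "\<nu> = \<sigma> \<and> \<tau> = \<nu>" using expansion_step_unique by blast
    with that(2) show False using expansion_stepD(4) by blast
  qed
  then show ?thesis unfolding lower_regular_def upper_regular_def by blast
qed

lemma morse_simplex_in_complex:
  assumes "morse_sequence W K" "\<nu> \<in> critical W \<union> lower_regular W \<union> upper_regular W"
  shows "\<nu> \<in> K"
proof -
  have "\<exists>i. Suc i < length W \<and> \<nu> \<in> W ! Suc i"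
    using assms(2) unfolding critical_def lower_regular_def upper_regular_def
    by (auto dest: expansion_stepD(1) filling_stepD(1))
  then obtain i where "Suc i < length W" "\<nu> \<in> W ! Suc i" by blast
  then show ?thesis using morse_sequence_subset_last[OF assms(1)] by blast
qed

definition regular_pair_simplices :: "'a set set list \<Rightarrow> int \<Rightarrow> 'a set set" where
  "regular_pair_simplices W p =
     {\<nu> \<in> lower_regular W. sdim \<nu> = p} \<union> {\<nu> \<in> upper_regular W. sdim \<nu> = p + 1}"

lemma lower_skeleton_add_eq:
  "lower_skeleton W (p + 1) = upper_skeleton W p \<union> regular_pair_simplices W p"
  unfolding lower_skeleton_def upper_skeleton_def regular_pair_simplices_def by auto

lemma regular_pair_simplices_subset:
  "morse_sequence W K \<Longrightarrow> regular_pair_simplices W p \<subseteq> K"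
  using morse_simplex_in_complex unfolding regular_pair_simplices_def by blast

lemma upper_skeleton_finite_simplex:
  assumes "morse_sequence W K" "\<nu> \<in> upper_skeleton W p"
  shows "finite \<nu>"
proof -
  have "\<nu> \<in> K"
    using assms morse_simplex_in_complex unfolding upper_skeleton_def by blast
  with morse_sequence_complex_last[OF assms(1)] show ?thesis
    unfolding simplicial_complex_def by blast
qed

lemma expansion_pair_free:
  assumes M: "morse_sequence W K" and j: "Suc j < length W"
    and e: "expansion_step (W ! j) (W ! Suc j) \<sigma> \<tau>" and dim: "sdim \<sigma> = p"
  shows "free_pair (upper_skeleton W p \<union> (regular_pair_simplices W p \<inter> W ! Suc j)) \<sigma> \<tau>"
proof -
  have free: "free_pair (W ! Suc j) \<sigma> \<tau>" using e unfolding expansion_step_def by blast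
  have "\<sigma> \<in> lower_regular W" "\<tau> \<in> upper_regular W"
    using j e unfolding lower_regular_def upper_regular_def by blast+
  moreover have "sdim \<tau> = p + 1"
    using expansion_step_sdim[OF e morse_sequence_complex[OF M j]] dim by simp
  ultimately have "\<sigma> \<in> regular_pair_simplices W p" "\<tau> \<in> regular_pair_simplices W p"
    using dim unfolding regular_pair_simplices_def by auto
  moreover have "\<nu> = \<sigma>" if "\<nu> \<in> upper_skeleton W p" "\<sigma> \<subseteq> \<nu>" for \<nu>
  proof (rule sdim_subset_eq)
    show "finite \<nu>" using upper_skeleton_finite_simplex[OF M that(1)] .
    show "sdim \<nu> \<le> sdim \<sigma>" using that(1) dim unfolding upper_skeleton_def by auto
  qed (fact that(2))
  ultimately show ?thesis using free unfolding free_pair_def by blast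
qed

lemma upper_skeleton_filtration_collapse:
  assumes M: "morse_sequence W K" and j: "Suc j < length W"
  shows "collapses_onto (upper_skeleton W p \<union> (regular_pair_simplices W p \<inter> W ! Suc j))
                        (upper_skeleton W p \<union> (regular_pair_simplices W p \<inter> W ! j))"
    (is "collapses_onto (?L (Suc j)) (?L j)")
proof -
  have unchanged: "collapses_onto (?L (Suc j)) (?L j)"
    if "W ! Suc j = W ! j \<union> N" "N \<inter> regular_pair_simplices W p = {}" for N
    using that unfolding collapses_onto_def by (simp add: Int_Un_distrib Int_commute)
  note disjoint = critical_lower_regular_disjoint[OF M] critical_upper_regular_disjoint[OF M]
    lower_upper_regular_disjoint[OF M]
  show ?thesis
  proof (cases rule: morse_sequence_step[OF M j])
    case (2 \<nu>)
    then have "\<nu> \<in> critical W" unfolding critical_def using j by blast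
    then show ?thesis
      using unchanged[of "{\<nu>}"] filling_stepD(1)[OF 2] disjoint
      unfolding regular_pair_simplices_def by blast
  next
    case (1 \<sigma> \<tau>)
    have "\<sigma> \<in> lower_regular W" "\<tau> \<in> upper_regular W"
      using j 1 unfolding lower_regular_def upper_regular_def by blast+
    moreover have dim: "sdim \<tau> = sdim \<sigma> + 1"
      using expansion_step_sdim[OF 1 morse_sequence_complex[OF M j]] .
    ultimately have not_crit: "\<sigma> \<notin> critical W \<and> \<sigma> \<notin> upper_regular W \<and> \<tau> \<notin> lower_regular W"
      using disjoint by blast
    note step = expansion_stepD[OF 1]
    show ?thesis
    proof (cases "sdim \<sigma> = p")
      case False
      with not_crit dim show ?thesis
        using unchanged[of "{\<sigma>, \<tau>}"] step(1) unfolding regular_pair_simplices_def by auto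
    next
      case True
      have "\<sigma> \<notin> upper_skeleton W p" "\<tau> \<notin> upper_skeleton W p"
        using not_crit True dim unfolding upper_skeleton_def by auto
      then have "?L j = ?L (Suc j) - {\<sigma>, \<tau>}" using step by blast
      then show ?thesis using free_pair_collapses_onto[OF expansion_pair_free[OF M j 1 True]] by simp
    qed
  qed
qed

theorem theorem6:
  fixes W :: "'a set set list" and K :: "'a set set" and p :: int
  assumes "morse_sequence W K" and "p \<ge> 0"
  shows "collapses_onto (lower_skeleton W (p + 1)) (upper_skeleton W p)"
proof -
  define L where "L j = upper_skeleton W p \<union> (regular_pair_simplices W p \<inter> W ! j)" for j
  have "collapses_onto (L (length W - 1)) (L 0)"
  proof (rule collapses_onto_chain)
    fix j assume "j < length W - 1"
    then have "Suc j < length W" by simp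
    then show "collapses_onto (L (Suc j)) (L j)"
      unfolding L_def by (rule upper_skeleton_filtration_collapse[OF assms(1)])
  qed
  moreover have "L 0 = upper_skeleton W p"
    unfolding L_def morse_sequence_first[OF assms(1)] by simp
  moreover have "L (length W - 1) = lower_skeleton W (p + 1)"
    unfolding L_def morse_sequence_last[OF assms(1)] lower_skeleton_add_eq
    using regular_pair_simplices_subset[OF assms(1)] by (simp add: Int_absorb2)
  ultimately show ?thesis by simp
qed

end
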